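(* For every finite simple graph $G=(V,E)$, $$\omega(\overline{X}_G)(x_1,x_2,\dots)=\sum_{W\subseteq V}(-1)^{|V\setminus W|}\prod_{i\ge1}H_{G|_W}(x_i),$$ where $H_{G|_W}(t)=1/I_{G|_W}(-t)$.
   Context: $\overline{X}_G=\sum_\kappa\prod_{v}\prod_{i\in\kappa(v)}x_i$ over proper set colorings $\kappa$ (maps $V\to$ nonempty subsets of $\mathbb{Z}_{>0}$, adjacent vertices get disjoint sets). $I_H(t)=\sum_n a_nt^n$ is the independence polynomial ($a_n$ = number of independent sets of size $n$); $H_G(t)=\sum_{n\ge0}|\mathcal{H}_G(n)|t^n$ is the generating series of heaps of $G$ by size (a heap being an equivalence class of words over $V$ under swapping adjacent nonadjacent-in-$G$ distinct letters), which equals $1/I_G(-t)$. $\omega$ is the standard involution on symmetric functions ($\omega(p_\lambda)=(-1)^{|\lambda|-\ell(\lambda)}p_\lambda$), extended degree-wise. $G|_W$ is the induced subgraph. *)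

theory Defs
  imports "HOL-Library.Poly_Mapping" "HOL-Library.FuncSet"
    "HOL-Computational_Algebra.Formal_Power_Series"
begin

text \<open>The induced subgraph on W is represented by the pair (W, E): every notion below only
  looks at edges between vertices of the given vertex set.\<close>

definition simple_graph :: "'a set \<Rightarrow> ('a \<Rightarrow> 'a \<Rightarrow> bool) \<Rightarrow> bool" where
  "simple_graph V E \<longleftrightarrow> finite V \<and> (\<forall>u v. E u v \<longrightarrow> E v u) \<and> (\<forall>v. \<not> E v v)"

text \<open>Formal power series in the countably many variables x_0, x_1, ... with rational
  coefficients, represented by their coefficient function on monomials (exponent vectors).\<close>

type_synonym mono = "nat \<Rightarrow>\<^sub>0 nat"
type_synonym mseries = "mono \<Rightarrow> rat"

definition mdeg :: "mono \<Rightarrow> nat" where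
  "mdeg \<alpha> = (\<Sum>i\<in>Poly_Mapping.keys \<alpha>. Poly_Mapping.lookup \<alpha> i)"

definition proper_set_coloring :: "'a set \<Rightarrow> ('a \<Rightarrow> 'a \<Rightarrow> bool) \<Rightarrow> ('a \<Rightarrow> nat set) \<Rightarrow> bool" where
  "proper_set_coloring V E \<kappa> \<longleftrightarrow>
     \<kappa> \<in> V \<rightarrow>\<^sub>E {S. finite S \<and> S \<noteq> {}} \<and>
     (\<forall>u\<in>V. \<forall>v\<in>V. E u v \<longrightarrow> \<kappa> u \<inter> \<kappa> v = {})"

definition coloring_mono :: "'a set \<Rightarrow> ('a \<Rightarrow> nat set) \<Rightarrow> mono" where
  "coloring_mono V \<kappa> = (\<Sum>v\<in>V. \<Sum>i\<in>\<kappa> v. Poly_Mapping.single i 1)"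

definition chromatic_set_sym :: "'a set \<Rightarrow> ('a \<Rightarrow> 'a \<Rightarrow> bool) \<Rightarrow> mseries" where
  "chromatic_set_sym V E \<alpha> =
     of_nat (card {\<kappa>. proper_set_coloring V E \<kappa> \<and> coloring_mono V \<kappa> = \<alpha>})"

definition independent :: "('a \<Rightarrow> 'a \<Rightarrow> bool) \<Rightarrow> 'a set \<Rightarrow> bool" where
  "independent E S \<longleftrightarrow> (\<forall>u\<in>S. \<forall>v\<in>S. \<not> E u v)"

definition indep_poly :: "'a set \<Rightarrow> ('a \<Rightarrow> 'a \<Rightarrow> bool) \<Rightarrow> rat fps" where
  "indep_poly V E = Abs_fps (\<lambda>n. of_nat (card {S. S \<subseteq> V \<and> independent E S \<and> card S = n}))"

definition fps_neg_var :: "rat fps \<Rightarrow> rat fps" where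
  "fps_neg_var f = Abs_fps (\<lambda>n. (-1) ^ n * fps_nth f n)"

definition heap_series :: "'a set \<Rightarrow> ('a \<Rightarrow> 'a \<Rightarrow> bool) \<Rightarrow> rat fps" where
  "heap_series V E = inverse (fps_neg_var (indep_poly V E))"

text \<open>Coefficient function of prod_{i} F(x_i) for a one-variable series F with F(0) = 1:
  the coefficient of x^alpha is prod_i [t^{alpha_i}]F (factors with alpha_i = 0 equal 1).\<close>

definition prod_all_vars :: "rat fps \<Rightarrow> mseries" where
  "prod_all_vars F \<alpha> = (\<Prod>i\<in>Poly_Mapping.keys \<alpha>. fps_nth F (Poly_Mapping.lookup \<alpha> i))"

text \<open>Power sum symmetric functions p_lambda = prod_r (sum_i x_i^{lambda_r}); the coefficient
  of x^alpha is the number of choices of variable indices j_r with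
  x^alpha = prod_r x_{j_r}^{lambda_r}.\<close>

definition partitions_of :: "nat \<Rightarrow> nat list set" where
  "partitions_of n = {lam. sorted_wrt (\<ge>) lam \<and> 0 \<notin> set lam \<and> sum_list lam = n}"

definition power_sum :: "nat list \<Rightarrow> mseries" where
  "power_sum lam \<alpha> = of_nat (card {j \<in> {..<length lam} \<rightarrow>\<^sub>E (UNIV :: nat set).
      \<alpha> = (\<Sum>r<length lam. Poly_Mapping.single (j r) (lam ! r))})"

text \<open>omega, extended degree-wise: omega f = g iff for every degree n there are coefficients
  a_lambda with f_n = sum a_lambda p_lambda and g_n = sum (-1)^(n - l(lambda)) a_lambda p_lambda.
  (Since the p_lambda are linearly independent, this determines g from symmetric f.)\<close>

definition omega_eq :: "mseries \<Rightarrow> mseries \<Rightarrow> bool" where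
  "omega_eq f g \<longleftrightarrow> (\<forall>n. \<exists>a :: nat list \<Rightarrow> rat.
     \<forall>\<alpha>. mdeg \<alpha> = n \<longrightarrow>
       f \<alpha> = (\<Sum>lam\<in>partitions_of n. a lam * power_sum lam \<alpha>) \<and>
       g \<alpha> = (\<Sum>lam\<in>partitions_of n. (-1) ^ (n - length lam) * a lam * power_sum lam \<alpha>))"

end

theory Submission
  imports Defs "HOL-Combinatorics.Permutations"
begin

text \<open>Inclusion-exclusion over the set W of vertices that receive a nonempty color set writes
  the chromatic set-coloring series as sum_W (-1)^|V - W| X_W, where X_W counts proper colorings
  of G|W by possibly empty sets. Recording the color classes, which are independent sets, gives
  X_W = prod_i I_{G|W}(x_i). For any series F with F(0) = 1 and log F = sum_k c_k t^k one has
  prod_i F(x_i) = exp (sum_k c_k p_k), while log (1/F(-t)) = sum_k (-1)^(k-1) c_k t^k; expanding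
  both exponentials in the p_lambda shows that omega maps prod_i F(x_i) to prod_i (1/F(-x_i)).
  Linearity of omega then finishes the proof.\<close>

unbundle fps_syntax

lemma mdeg_eq_sum_superset:
  assumes "finite K" "Poly_Mapping.keys \<alpha> \<subseteq> K"
  shows "mdeg \<alpha> = (\<Sum>i\<in>K. Poly_Mapping.lookup \<alpha> i)"
  unfolding mdeg_def by (rule sum.mono_neutral_left) (use assms in \<open>auto simp: in_keys_iff\<close>)

lemma mdeg_add: "mdeg (\<alpha> + \<beta>) = mdeg \<alpha> + mdeg \<beta>"
proof -
  let ?K = "Poly_Mapping.keys \<alpha> \<union> Poly_Mapping.keys \<beta>"
  have "mdeg (\<alpha> + \<beta>) = (\<Sum>i\<in>?K. Poly_Mapping.lookup (\<alpha> + \<beta>) i)"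
    by (rule mdeg_eq_sum_superset) (use keys_add[of \<alpha> \<beta>] in auto)
  also have "\<dots> = mdeg \<alpha> + mdeg \<beta>"
    by (simp add: lookup_add sum.distrib mdeg_eq_sum_superset[of ?K])
  finally show ?thesis .
qed

lemma mdeg_single [simp]: "mdeg (Poly_Mapping.single i k) = k"
  unfolding mdeg_def by (cases "k = 0") auto

lemma mdeg_eq_0_iff: "mdeg \<alpha> = 0 \<longleftrightarrow> \<alpha> = 0"
  unfolding mdeg_def by (auto simp: in_keys_iff intro: poly_mapping_eqI)

lemma lookup_le_mdeg: "Poly_Mapping.lookup \<alpha> i \<le> mdeg \<alpha>"
  unfolding mdeg_def by (cases "i \<in> Poly_Mapping.keys \<alpha>") (auto intro: member_le_sum simp: in_keys_iff)

lemma eq_single_add_iff: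
  fixes \<alpha> \<beta> :: mono
  shows "\<alpha> = Poly_Mapping.single i k + \<beta> \<longleftrightarrow>
    k \<le> Poly_Mapping.lookup \<alpha> i \<and> \<beta> = \<alpha> - Poly_Mapping.single i k"
  by (auto simp: lookup_add poly_mapping_eq_iff fun_eq_iff lookup_minus lookup_single when_def)

lemma mdeg_diff_single:
  assumes "k \<le> Poly_Mapping.lookup \<alpha> i"
  shows "mdeg (\<alpha> - Poly_Mapping.single i k) = mdeg \<alpha> - k"
  using mdeg_add[of "Poly_Mapping.single i k" "\<alpha> - Poly_Mapping.single i k"]
    eq_single_add_iff[of \<alpha> i k "\<alpha> - Poly_Mapping.single i k"] assms
  by simp

subsection \<open>Power sums\<close>

definition power_sum_terms :: "nat list \<Rightarrow> mono \<Rightarrow> (nat \<Rightarrow> nat) set" where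
  "power_sum_terms lam \<alpha> = {j \<in> {..<length lam} \<rightarrow>\<^sub>E (UNIV :: nat set).
      \<alpha> = (\<Sum>r<length lam. Poly_Mapping.single (j r) (lam ! r))}"

lemma power_sum_eq_card: "power_sum lam \<alpha> = of_nat (card (power_sum_terms lam \<alpha>))"
  unfolding power_sum_def power_sum_terms_def ..

lemma finite_power_sum_terms:
  assumes "0 \<notin> set lam"
  shows "finite (power_sum_terms lam \<alpha>)"
proof (rule finite_subset)
  show "power_sum_terms lam \<alpha> \<subseteq> {..<length lam} \<rightarrow>\<^sub>E Poly_Mapping.keys \<alpha>"
  proof
    fix j assume j: "j \<in> power_sum_terms lam \<alpha>"
    have "j r \<in> Poly_Mapping.keys \<alpha>" if r: "r < length lam" for r
    proof -
      have "lam ! r = Poly_Mapping.lookup (Poly_Mapping.single (j r) (lam ! r)) (j r)"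
        by simp
      also have "\<dots> \<le> (\<Sum>s<length lam. Poly_Mapping.lookup (Poly_Mapping.single (j s) (lam ! s)) (j r))"
        by (rule member_le_sum) (use r in auto)
      also have "\<dots> = Poly_Mapping.lookup \<alpha> (j r)"
        using j by (simp add: power_sum_terms_def lookup_sum)
      finally show ?thesis
        using assms r by (metis in_keys_iff le_zero_eq nth_mem)
    qed
    then show "j \<in> {..<length lam} \<rightarrow>\<^sub>E Poly_Mapping.keys \<alpha>"
      using j by (auto simp: power_sum_terms_def PiE_iff)
  qed
qed (auto intro: finite_PiE)

lemma power_sum_Nil: "power_sum [] \<alpha> = (if \<alpha> = 0 then 1 else 0)"
  unfolding power_sum_def by auto

lemma bij_betw_power_sum_terms_Cons:
  assumes "k > 0"
  shows "bij_betw (\<lambda>j. (j 0, restrict (j \<circ> Suc) {..<length lam})) (power_sum_terms (k # lam) \<alpha>)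
    (SIGMA i:{i \<in> Poly_Mapping.keys \<alpha>. k \<le> Poly_Mapping.lookup \<alpha> i}.
      power_sum_terms lam (\<alpha> - Poly_Mapping.single i k))"
    (is "bij_betw ?split _ ?S")
proof -
  let ?l = "length lam"
  define join_head where "join_head p = (\<lambda>r. if r < Suc ?l then (if r = 0 then fst p else snd p (r - 1))
    else undefined)" for p :: "nat \<times> (nat \<Rightarrow> nat)"
  have sum_Cons: "(\<Sum>r<Suc ?l. Poly_Mapping.single (j r) ((k # lam) ! r)) =
      Poly_Mapping.single (j 0) k + (\<Sum>r<?l. Poly_Mapping.single (j (Suc r)) (lam ! r))" for j
    by (subst sum.lessThan_Suc_shift) simp
  show ?thesis
  proof (rule bij_betw_byWitness[where f' = join_head])
    show "\<forall>j\<in>power_sum_terms (k # lam) \<alpha>. join_head (?split j) = j"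
      "\<forall>p\<in>?S. ?split (join_head p) = p"
      by (auto simp: power_sum_terms_def join_head_def PiE_iff extensional_def fun_eq_iff)
    show "?split ` power_sum_terms (k # lam) \<alpha> \<subseteq> ?S"
    proof (rule image_subsetI)
      fix j assume "j \<in> power_sum_terms (k # lam) \<alpha>"
      then have "\<alpha> = Poly_Mapping.single (j 0) k + (\<Sum>r<?l. Poly_Mapping.single (j (Suc r)) (lam ! r))"
        by (simp add: power_sum_terms_def flip: sum_Cons del: sum.lessThan_Suc)
      then have "k \<le> Poly_Mapping.lookup \<alpha> (j 0)" and
        rest: "(\<Sum>r<?l. Poly_Mapping.single (j (Suc r)) (lam ! r)) = \<alpha> - Poly_Mapping.single (j 0) k"
        by (simp_all add: eq_single_add_iff)
      moreover have "restrict (j \<circ> Suc) {..<?l} \<in> power_sum_terms lam (\<alpha> - Poly_Mapping.single (j 0) k)"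
        using rest by (simp add: power_sum_terms_def)
      ultimately show "?split j \<in> ?S"
        using assms by (auto simp: in_keys_iff)
    qed
    show "join_head ` ?S \<subseteq> power_sum_terms (k # lam) \<alpha>"
    proof (rule image_subsetI)
      fix p assume "p \<in> ?S"
      then obtain i j where p: "p = (i, j)" and i: "k \<le> Poly_Mapping.lookup \<alpha> i"
        and j: "j \<in> power_sum_terms lam (\<alpha> - Poly_Mapping.single i k)"
        by auto
      have "(\<Sum>r<?l. Poly_Mapping.single (join_head p (Suc r)) (lam ! r)) =
          (\<Sum>r<?l. Poly_Mapping.single (j r) (lam ! r))"
        by (rule sum.cong) (auto simp: join_head_def p)
      also have "\<dots> = \<alpha> - Poly_Mapping.single i k"
        using j by (simp add: power_sum_terms_def)
      finally have "\<alpha> = Poly_Mapping.single (join_head p 0) k +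
          (\<Sum>r<?l. Poly_Mapping.single (join_head p (Suc r)) (lam ! r))"
        using i by (simp add: eq_single_add_iff join_head_def p)
      moreover have "join_head p \<in> {..<Suc ?l} \<rightarrow>\<^sub>E UNIV"
        by (simp add: join_head_def PiE_iff extensional_def)
      ultimately show "join_head p \<in> power_sum_terms (k # lam) \<alpha>"
        unfolding power_sum_terms_def length_Cons sum_Cons by blast
    qed
  qed
qed

lemma power_sum_Cons:
  assumes "0 \<notin> set (k # lam)"
  shows "power_sum (k # lam) \<alpha> = (\<Sum>i\<in>Poly_Mapping.keys \<alpha>.
    if k \<le> Poly_Mapping.lookup \<alpha> i then power_sum lam (\<alpha> - Poly_Mapping.single i k) else 0)"
proof -
  let ?I = "{i \<in> Poly_Mapping.keys \<alpha>. k \<le> Poly_Mapping.lookup \<alpha> i}"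
  have "card (power_sum_terms (k # lam) \<alpha>) =
      card (SIGMA i:?I. power_sum_terms lam (\<alpha> - Poly_Mapping.single i k))"
    using assms by (intro bij_betw_same_card[OF bij_betw_power_sum_terms_Cons]) auto
  also have "\<dots> = (\<Sum>i\<in>?I. card (power_sum_terms lam (\<alpha> - Poly_Mapping.single i k)))"
    using assms by (intro card_SigmaI) (auto intro: finite_power_sum_terms)
  finally show ?thesis
    by (auto simp: power_sum_eq_card sum.inter_filter of_nat_sum intro!: sum.cong)
qed

lemma card_power_sum_terms_perm_le:
  assumes "mset lam = mset mu" "0 \<notin> set mu"
  shows "card (power_sum_terms lam \<alpha>) \<le> card (power_sum_terms mu \<alpha>)"
proof -
  let ?l = "length mu"
  obtain p where p: "p permutes {..<?l}" "permute_list p mu = lam"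
    using mset_eq_permutation[OF assms(1)] by blast
  have len: "length lam = ?l"
    using p(2) by auto
  have lam_nth: "lam ! r = mu ! p r" if "r < ?l" for r
    using p that permute_list_nth by metis
  have inv_p: "inv p permutes {..<?l}"
    using p(1) by (rule permutes_inv)
  define move where "move j = restrict (j \<circ> inv p) {..<?l}" for j :: "nat \<Rightarrow> nat"
  have "inj_on move (power_sum_terms lam \<alpha>)"
  proof (rule inj_onI)
    fix j j' assume jj': "j \<in> power_sum_terms lam \<alpha>" "j' \<in> power_sum_terms lam \<alpha>" "move j = move j'"
    have "j r = j' r" if "r < ?l" for r
      using fun_cong[OF jj'(3), of "p r"] that p(1) permutes_in_image[OF p(1)]
      by (auto simp: move_def permutes_inverses(2)[OF p(1)])
    moreover have "j r = j' r" if "\<not> r < ?l" for r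
      using jj'(1,2) len that by (simp add: power_sum_terms_def PiE_iff extensional_def)
    ultimately show "j = j'"
      by (metis ext)
  qed
  moreover have "move ` power_sum_terms lam \<alpha> \<subseteq> power_sum_terms mu \<alpha>"
  proof
    fix j' assume "j' \<in> move ` power_sum_terms lam \<alpha>"
    then obtain j where j: "j \<in> power_sum_terms lam \<alpha>" and j': "j' = move j"
      by blast
    have "\<alpha> = (\<Sum>r<?l. Poly_Mapping.single (j r) (mu ! p r))"
      using j len lam_nth by (simp add: power_sum_terms_def)
    also have "\<dots> = (\<Sum>r<?l. Poly_Mapping.single (j (inv p r)) (mu ! r))"
      using sum.reindex_bij_betw[OF permutes_imp_bij[OF inv_p],
          of "\<lambda>r. Poly_Mapping.single (j r) (mu ! p r)"]
      by (simp add: permutes_inverses(1)[OF p(1)])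
    finally show "j' \<in> power_sum_terms mu \<alpha>"
      by (simp add: power_sum_terms_def j' move_def)
  qed
  ultimately show ?thesis
    using assms(2) by (intro card_inj_on_le finite_power_sum_terms)
qed

lemma power_sum_perm:
  assumes "mset lam = mset mu" "0 \<notin> set mu"
  shows "power_sum lam = power_sum mu"
proof -
  have "0 \<notin> set lam"
    using assms by (metis set_mset_mset)
  then show ?thesis
    using assms card_power_sum_terms_perm_le[of lam mu] card_power_sum_terms_perm_le[of mu lam]
    by (auto simp: fun_eq_iff power_sum_eq_card intro: antisym)
qed

subsection \<open>The exponential of a series in the power sums\<close>

definition compositions :: "nat \<Rightarrow> nat list set" where
  "compositions n = {s. 0 \<notin> set s \<and> sum_list s = n}"

lemma length_le_sum_list: "0 \<notin> set s \<Longrightarrow> length s \<le> sum_list s"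
  by (induction s) auto

lemma finite_compositions: "finite (compositions n)"
proof (rule finite_subset)
  show "compositions n \<subseteq> {s. set s \<subseteq> {..n} \<and> length s \<le> n}"
    using length_le_sum_list member_le_sum_list by (fastforce simp: compositions_def)
qed (rule finite_lists_length_le, simp)

lemma compositions_0: "compositions 0 = {[]}"
  by (auto simp: compositions_def sum_list_eq_0_iff) (metis list.set_intros(1) neq_Nil_conv)

lemma sum_compositions_Cons:
  assumes "n > 0"
  shows "(\<Sum>s\<in>compositions n. h s) = (\<Sum>k\<in>{1..n}. \<Sum>t\<in>compositions (n - k). h (k # t))"
proof -
  have "compositions n = (\<lambda>(k, t). k # t) ` (SIGMA k:{1..n}. compositions (n - k))"
  proof (intro equalityI subsetI)
    fix s assume s: "s \<in> compositions n"
    then obtain k t where "s = k # t"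
      using assms by (cases s) (auto simp: compositions_def)
    then show "s \<in> (\<lambda>(k, t). k # t) ` (SIGMA k:{1..n}. compositions (n - k))"
      using s by (auto simp: compositions_def image_iff)
  qed (auto simp: compositions_def)
  moreover have "inj_on (\<lambda>(k, t). k # t) A" for A :: "(nat \<times> nat list) set"
    by (auto simp: inj_on_def)
  ultimately show ?thesis
    by (simp add: sum.reindex sum.Sigma finite_compositions split_def)
qed

text \<open>Summed over the rearrangements of a partition lambda, these weights give the coefficient
  of p_lambda in exp (sum_k c_k p_k); all that is used below is the Euler recursion they satisfy.\<close>

primrec comp_weight :: "(nat \<Rightarrow> rat) \<Rightarrow> nat list \<Rightarrow> rat" where
  "comp_weight c [] = 1"
| "comp_weight c (k # t) = of_nat k * c k / of_nat (k + sum_list t) * comp_weight c t"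

definition exp_power_sums :: "(nat \<Rightarrow> rat) \<Rightarrow> mseries" where
  "exp_power_sums c \<alpha> = (\<Sum>s\<in>compositions (mdeg \<alpha>). comp_weight c s * power_sum s \<alpha>)"

text \<open>The coefficient of x^alpha in (sum_k k c_k p_k) f. The Euler operator sum_i x_i d/dx_i multiplies
  the coefficient of x^alpha by mdeg alpha, so f = exp (sum_k c_k p_k) is the unique series with
  constant term 1 and mdeg alpha f(alpha) = dlog_mult c f alpha.\<close>

definition dlog_mult :: "(nat \<Rightarrow> rat) \<Rightarrow> mseries \<Rightarrow> mseries" where
  "dlog_mult c f \<alpha> = (\<Sum>i\<in>Poly_Mapping.keys \<alpha>. \<Sum>k\<in>{1..Poly_Mapping.lookup \<alpha> i}.
      of_nat k * c k * f (\<alpha> - Poly_Mapping.single i k))"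

lemma euler_recursion_unique:
  assumes "f 0 = g 0"
    and f: "\<And>\<alpha>. mdeg \<alpha> > 0 \<Longrightarrow> of_nat (mdeg \<alpha>) * f \<alpha> = dlog_mult c f \<alpha>"
    and g: "\<And>\<alpha>. mdeg \<alpha> > 0 \<Longrightarrow> of_nat (mdeg \<alpha>) * g \<alpha> = dlog_mult c g \<alpha>"
  shows "f \<alpha> = g \<alpha>"
proof (induction "mdeg \<alpha>" arbitrary: \<alpha> rule: less_induct)
  case less
  show ?case
  proof (cases "mdeg \<alpha> = 0")
    case True
    then show ?thesis
      using assms(1) by (simp add: mdeg_eq_0_iff)
  next
    case False
    have "dlog_mult c f \<alpha> = dlog_mult c g \<alpha>"
      unfolding dlog_mult_def
      by (intro sum.cong refl arg_cong[where f = "(*) _"] less) (use False in \<open>auto simp: mdeg_diff_single\<close>)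
    then show ?thesis
      using False f g by (metis mult_left_cancel neq0_conv of_nat_eq_0_iff)
  qed
qed

lemma exp_power_sums_0 [simp]: "exp_power_sums c 0 = 1"
  by (simp add: exp_power_sums_def mdeg_def compositions_0 power_sum_Nil)

lemma exp_power_sums_euler:
  assumes n: "mdeg \<alpha> > 0"
  shows "of_nat (mdeg \<alpha>) * exp_power_sums c \<alpha> = dlog_mult c (exp_power_sums c) \<alpha>"
proof -
  let ?n = "mdeg \<alpha>"
  let ?a = "Poly_Mapping.lookup \<alpha>"
  let ?rest = "\<lambda>i k. \<alpha> - Poly_Mapping.single i k"
  let ?term = "\<lambda>i k t. of_nat k * c k * (comp_weight c t * power_sum t (?rest i k))"
  have "of_nat ?n * exp_power_sums c \<alpha> =
      (\<Sum>k\<in>{1..?n}. \<Sum>t\<in>compositions (?n - k). of_nat ?n * (comp_weight c (k # t) * power_sum (k # t) \<alpha>))"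
    by (simp add: exp_power_sums_def sum_compositions_Cons[OF n] sum_distrib_left)
  also have "\<dots> = (\<Sum>k\<in>{1..?n}. \<Sum>t\<in>compositions (?n - k). \<Sum>i\<in>Poly_Mapping.keys \<alpha>.
      if k \<le> ?a i then ?term i k t else 0)"
  proof (intro sum.cong refl)
    fix k t assume k: "k \<in> {1..?n}" and t: "t \<in> compositions (?n - k)"
    then have "0 \<notin> set (k # t)" "k + sum_list t = ?n"
      by (auto simp: compositions_def)
    then show "of_nat ?n * (comp_weight c (k # t) * power_sum (k # t) \<alpha>) =
        (\<Sum>i\<in>Poly_Mapping.keys \<alpha>. if k \<le> ?a i then ?term i k t else 0)"
      using n by (simp add: power_sum_Cons sum_distrib_left if_distrib algebra_simps cong: if_cong)
  qed
  also have "\<dots> = (\<Sum>i\<in>Poly_Mapping.keys \<alpha>. \<Sum>k\<in>{1..?n}.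
      if k \<le> ?a i then of_nat k * c k * exp_power_sums c (?rest i k) else 0)"
    by (subst sum.swap, subst (2) sum.swap)
      (auto intro!: sum.cong simp: exp_power_sums_def mdeg_diff_single sum_distrib_left)
  also have "\<dots> = dlog_mult c (exp_power_sums c) \<alpha>"
  proof -
    have "{k \<in> {1..?n}. k \<le> ?a i} = {1..?a i}" for i
      using lookup_le_mdeg[of \<alpha> i] by auto
    then show ?thesis
      by (simp add: dlog_mult_def sum.inter_filter [symmetric])
  qed
  finally show ?thesis .
qed

subsection \<open>Logarithmic coefficients of a one-variable series\<close>

text \<open>F = exp (sum_k c_k t^k), expressed through the logarithmic derivative F'/F.\<close>

definition has_log_coeffs :: "(nat \<Rightarrow> rat) \<Rightarrow> rat fps \<Rightarrow> bool" where
  "has_log_coeffs c F \<longleftrightarrow>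
     F $ 0 = 1 \<and> fps_deriv F = Abs_fps (\<lambda>i. of_nat (Suc i) * c (Suc i)) * F"

lemma has_log_coeffs_nth:
  assumes "has_log_coeffs c F"
  shows "of_nat m * F $ m = (\<Sum>k\<in>{1..m}. of_nat k * c k * F $ (m - k))"
proof (cases m)
  case (Suc m')
  have "of_nat m * F $ m = fps_deriv F $ m'"
    using Suc by (simp add: algebra_simps)
  also have "\<dots> = (\<Sum>i=0..m'. of_nat (Suc i) * c (Suc i) * F $ (m' - i))"
    using assms by (simp add: has_log_coeffs_def fps_mult_nth)
  also have "\<dots> = (\<Sum>k\<in>{Suc 0..Suc m'}. of_nat k * c k * F $ (Suc m' - k))"
    by (subst sum.shift_bounds_cl_Suc_ivl) simp
  finally show ?thesis
    using Suc by simp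
qed simp

definition log_coeff :: "rat fps \<Rightarrow> nat \<Rightarrow> rat" where
  "log_coeff F k = (fps_deriv F * inverse F) $ (k - 1) / of_nat k"

lemma has_log_coeffs_log_coeff:
  assumes "F $ 0 = 1"
  shows "has_log_coeffs (log_coeff F) F"
proof -
  have "Abs_fps (\<lambda>i. of_nat (Suc i) * log_coeff F (Suc i)) = fps_deriv F * inverse F"
    by (rule fps_ext) (simp add: log_coeff_def del: of_nat_Suc)
  moreover have "fps_deriv F * inverse F * F = fps_deriv F"
    using assms by (simp add: mult.assoc inverse_mult_eq_1)
  ultimately show ?thesis
    using assms by (simp add: has_log_coeffs_def)
qed

definition alternate :: "(nat \<Rightarrow> rat) \<Rightarrow> nat \<Rightarrow> rat" where
  "alternate c k = (-1) ^ (k - 1) * c k"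

text \<open>log (1 / F(-t)) = - log F(-t), so passing from F to 1/F(-t) alternates the signs of the
  logarithmic coefficients.\<close>

lemma has_log_coeffs_inverse_neg_var:
  assumes F: "has_log_coeffs c F"
  shows "has_log_coeffs (alternate c) (inverse (fps_neg_var F))"
proof -
  define D where "D = Abs_fps (\<lambda>i. of_nat (Suc i) * c (Suc i))"
  define D' where "D' = Abs_fps (\<lambda>i. of_nat (Suc i) * alternate c (Suc i))"
  define N where "N = fps_neg_var F"
  have N0: "N $ 0 = 1"
    using F by (simp add: N_def fps_neg_var_def has_log_coeffs_def)
  have sign: "(-1::rat) ^ j * (-1) ^ (i - j) = (-1) ^ i" if "j \<le> i" for i j :: nat
    using that by (simp flip: power_add)
  have "(D' * N) $ i = (-1) ^ i * (D * F) $ i" for i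
    unfolding fps_mult_nth sum_distrib_left
    by (intro sum.cong refl) (simp add: D_def D'_def N_def fps_neg_var_def alternate_def
        sign [symmetric] algebra_simps)
  moreover have "(D * F) $ i = of_nat (Suc i) * F $ Suc i" for i
    using F fps_deriv_nth[of F i] by (simp add: has_log_coeffs_def D_def)
  ultimately have dN: "fps_deriv N = - (D' * N)"
    by (intro fps_ext) (simp add: N_def fps_neg_var_def)
  have "fps_deriv (inverse N) = - fps_deriv N * (inverse N)\<^sup>2"
    using N0 by (simp add: fps_inverse_deriv)
  also have "\<dots> = D' * (N * inverse N) * inverse N"
    by (simp add: dN power2_eq_square mult.assoc)
  also have "\<dots> = D' * inverse N"
    using N0 by (simp add: inverse_mult_eq_1')
  finally show ?thesis
    using N0 by (simp add: has_log_coeffs_def N_def D'_def)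
qed

lemma prod_all_vars_0 [simp]: "prod_all_vars F 0 = 1"
  by (simp add: prod_all_vars_def)

lemma prod_all_vars_eq_prod_superset:
  assumes "finite K" "Poly_Mapping.keys \<alpha> \<subseteq> K" "F $ 0 = 1"
  shows "prod_all_vars F \<alpha> = (\<Prod>i\<in>K. F $ Poly_Mapping.lookup \<alpha> i)"
  unfolding prod_all_vars_def
  by (rule prod.mono_neutral_left) (use assms in \<open>auto simp: in_keys_iff\<close>)

lemma prod_all_vars_diff_single:
  assumes "F $ 0 = 1" "i \<in> Poly_Mapping.keys \<alpha>"
  shows "prod_all_vars F (\<alpha> - Poly_Mapping.single i k) =
    F $ (Poly_Mapping.lookup \<alpha> i - k) * (\<Prod>j\<in>Poly_Mapping.keys \<alpha> - {i}. F $ Poly_Mapping.lookup \<alpha> j)"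
proof -
  have "Poly_Mapping.keys (\<alpha> - Poly_Mapping.single i k) \<subseteq> Poly_Mapping.keys \<alpha>"
    by (auto simp: in_keys_iff lookup_minus)
  then have "prod_all_vars F (\<alpha> - Poly_Mapping.single i k) =
      (\<Prod>j\<in>Poly_Mapping.keys \<alpha>. F $ Poly_Mapping.lookup (\<alpha> - Poly_Mapping.single i k) j)"
    using assms(1) by (intro prod_all_vars_eq_prod_superset) auto
  also have "\<dots> = F $ (Poly_Mapping.lookup \<alpha> i - k) *
      (\<Prod>j\<in>Poly_Mapping.keys \<alpha> - {i}. F $ Poly_Mapping.lookup (\<alpha> - Poly_Mapping.single i k) j)"
    using assms(2) by (simp add: prod.remove lookup_minus)
  also have "(\<Prod>j\<in>Poly_Mapping.keys \<alpha> - {i}. F $ Poly_Mapping.lookup (\<alpha> - Poly_Mapping.single i k) j) =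
      (\<Prod>j\<in>Poly_Mapping.keys \<alpha> - {i}. F $ Poly_Mapping.lookup \<alpha> j)"
    by (intro prod.cong refl) (simp add: lookup_minus lookup_single)
  finally show ?thesis .
qed

lemma prod_all_vars_euler:
  assumes F: "has_log_coeffs c F"
  shows "of_nat (mdeg \<alpha>) * prod_all_vars F \<alpha> = dlog_mult c (prod_all_vars F) \<alpha>"
proof -
  let ?K = "Poly_Mapping.keys \<alpha>"
  let ?a = "Poly_Mapping.lookup \<alpha>"
  let ?others = "\<lambda>i. \<Prod>j\<in>?K - {i}. F $ ?a j"
  have F0: "F $ 0 = 1"
    using F by (simp add: has_log_coeffs_def)
  have "of_nat (mdeg \<alpha>) * prod_all_vars F \<alpha> = (\<Sum>i\<in>?K. of_nat (?a i) * F $ ?a i * ?others i)"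
    unfolding prod_all_vars_def mdeg_def of_nat_sum sum_distrib_right
    by (intro sum.cong refl) (simp add: prod.remove mult.assoc)
  also have "\<dots> = (\<Sum>i\<in>?K. (\<Sum>k\<in>{1..?a i}. of_nat k * c k * F $ (?a i - k)) * ?others i)"
    using has_log_coeffs_nth[OF F] by simp
  also have "\<dots> = dlog_mult c (prod_all_vars F) \<alpha>"
    unfolding dlog_mult_def sum_distrib_right
    by (intro sum.cong refl) (simp add: prod_all_vars_diff_single[OF F0] mult.assoc)
  finally show ?thesis .
qed

lemma prod_all_vars_eq_exp_power_sums:
  assumes "has_log_coeffs c F"
  shows "prod_all_vars F \<alpha> = exp_power_sums c \<alpha>"
  by (rule euler_recursion_unique[where c = c])
    (simp_all add: prod_all_vars_euler[OF assms] exp_power_sums_euler)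

subsection \<open>The involution omega\<close>

lemma rev_sort_in_partitions_of: "s \<in> compositions n \<Longrightarrow> rev (sort s) \<in> partitions_of n"
  by (simp add: partitions_of_def compositions_def sorted_wrt_rev sum_list_rev
      flip: sum_mset_sum_list)

lemma finite_partitions_of: "finite (partitions_of n)"
  by (rule finite_subset[OF _ finite_compositions[of n]])
    (auto simp: partitions_of_def compositions_def)

lemma omega_eq_iff:
  "omega_eq f g \<longleftrightarrow> (\<exists>a. \<forall>n \<alpha>. mdeg \<alpha> = n \<longrightarrow>
     f \<alpha> = (\<Sum>lam\<in>partitions_of n. a n lam * power_sum lam \<alpha>) \<and>
     g \<alpha> = (\<Sum>lam\<in>partitions_of n. (-1) ^ (n - length lam) * a n lam * power_sum lam \<alpha>))"
  unfolding omega_eq_def by (rule choice_iff)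

definition partition_coeff :: "(nat \<Rightarrow> rat) \<Rightarrow> nat \<Rightarrow> nat list \<Rightarrow> rat" where
  "partition_coeff c n lam = (\<Sum>s | s \<in> compositions n \<and> rev (sort s) = lam. comp_weight c s)"

lemma exp_power_sums_eq_partitions:
  assumes "mdeg \<alpha> = n"
  shows "exp_power_sums c \<alpha> = (\<Sum>lam\<in>partitions_of n. partition_coeff c n lam * power_sum lam \<alpha>)"
proof -
  have "exp_power_sums c \<alpha> = (\<Sum>lam\<in>partitions_of n.
      \<Sum>s | s \<in> compositions n \<and> rev (sort s) = lam. comp_weight c s * power_sum s \<alpha>)"
    unfolding exp_power_sums_def assms
    by (rule sum.group [symmetric])
      (auto simp: finite_compositions finite_partitions_of rev_sort_in_partitions_of)
  also have "\<dots> = (\<Sum>lam\<in>partitions_of n. partition_coeff c n lam * power_sum lam \<alpha>)"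
    unfolding partition_coeff_def sum_distrib_right
  proof (intro sum.cong refl)
    fix lam s assume "s \<in> {s. s \<in> compositions n \<and> rev (sort s) = lam}"
    then have "mset s = mset lam" "0 \<notin> set lam"
      by (auto simp: compositions_def)
    then show "comp_weight c s * power_sum s \<alpha> = comp_weight c s * power_sum lam \<alpha>"
      using power_sum_perm[of s lam] by simp
  qed
  finally show ?thesis .
qed

lemma comp_weight_alternate:
  "0 \<notin> set s \<Longrightarrow> comp_weight (alternate c) s = (-1) ^ (sum_list s - length s) * comp_weight c s"
proof (induction s)
  case (Cons k t)
  then have "k \<ge> 1" "0 \<notin> set t"
    by auto
  moreover have "length t \<le> sum_list t"
    using \<open>0 \<notin> set t\<close> by (rule length_le_sum_list)
  ultimately have exponent: "sum_list (k # t) - length (k # t) = (k - 1) + (sum_list t - length t)"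
    by simp
  have "comp_weight (alternate c) (k # t) =
      (-1) ^ (k - 1) * (-1) ^ (sum_list t - length t) * comp_weight c (k # t)"
    using Cons.IH \<open>0 \<notin> set t\<close> by (simp add: alternate_def[of c k])
  also have "(-1) ^ (k - 1) * (-1) ^ (sum_list t - length t) =
      (-1 :: rat) ^ (sum_list (k # t) - length (k # t))"
    unfolding exponent power_add ..
  finally show ?case .
qed simp

lemma partition_coeff_alternate:
  "partition_coeff (alternate c) n lam = (-1) ^ (n - length lam) * partition_coeff c n lam"
  unfolding partition_coeff_def sum_distrib_left
proof (intro sum.cong refl)
  fix s assume "s \<in> {s. s \<in> compositions n \<and> rev (sort s) = lam}"
  then have "0 \<notin> set s" "sum_list s = n" "length s = length lam"
    by (auto simp: compositions_def)
  then show "comp_weight (alternate c) s = (-1) ^ (n - length lam) * comp_weight c s"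
    by (simp add: comp_weight_alternate)
qed

lemma omega_eq_exp_power_sums: "omega_eq (exp_power_sums c) (exp_power_sums (alternate c))"
  unfolding omega_eq_iff
  by (intro exI[of _ "partition_coeff c"])
    (simp add: exp_power_sums_eq_partitions partition_coeff_alternate mult.assoc)

lemma omega_eq_prod_all_vars_inverse_neg_var:
  assumes "F $ 0 = 1"
  shows "omega_eq (prod_all_vars F) (prod_all_vars (inverse (fps_neg_var F)))"
proof -
  have F: "has_log_coeffs (log_coeff F) F"
    using assms by (rule has_log_coeffs_log_coeff)
  have "prod_all_vars F = exp_power_sums (log_coeff F)"
      "prod_all_vars (inverse (fps_neg_var F)) = exp_power_sums (alternate (log_coeff F))"
    using prod_all_vars_eq_exp_power_sums F has_log_coeffs_inverse_neg_var[OF F] by blast+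
  then show ?thesis
    by (simp add: omega_eq_exp_power_sums)
qed

lemma omega_eq_sum:
  assumes "finite I" "\<And>i. i \<in> I \<Longrightarrow> omega_eq (f i) (g i)"
  shows "omega_eq (\<lambda>\<alpha>. \<Sum>i\<in>I. w i * f i \<alpha>) (\<lambda>\<alpha>. \<Sum>i\<in>I. w i * g i \<alpha>)"
proof -
  obtain a where a: "\<And>i n \<alpha>. i \<in> I \<Longrightarrow> mdeg \<alpha> = n \<Longrightarrow>
      f i \<alpha> = (\<Sum>lam\<in>partitions_of n. a i n lam * power_sum lam \<alpha>) \<and>
      g i \<alpha> = (\<Sum>lam\<in>partitions_of n. (-1) ^ (n - length lam) * a i n lam * power_sum lam \<alpha>)"
    using bchoice[of I "\<lambda>i a. \<forall>n \<alpha>. mdeg \<alpha> = n \<longrightarrow>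
      f i \<alpha> = (\<Sum>lam\<in>partitions_of n. a n lam * power_sum lam \<alpha>) \<and>
      g i \<alpha> = (\<Sum>lam\<in>partitions_of n. (-1) ^ (n - length lam) * a n lam * power_sum lam \<alpha>)"]
      assms(2) by (auto simp: omega_eq_iff)
  show ?thesis
    unfolding omega_eq_iff
  proof (intro exI[of _ "\<lambda>n lam. \<Sum>i\<in>I. w i * a i n lam"] allI impI)
    fix n \<alpha> assume n: "mdeg \<alpha> = n"
    let ?P = "partitions_of n"
    have "(\<Sum>i\<in>I. w i * f i \<alpha>) = (\<Sum>i\<in>I. \<Sum>lam\<in>?P. w i * a i n lam * power_sum lam \<alpha>)"
      "(\<Sum>i\<in>I. w i * g i \<alpha>) =
        (\<Sum>i\<in>I. \<Sum>lam\<in>?P. (-1) ^ (n - length lam) * (w i * a i n lam) * power_sum lam \<alpha>)"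
      using a[OF _ n] by (auto intro!: sum.cong simp: sum_distrib_left mult_ac)
    then show "(\<Sum>i\<in>I. w i * f i \<alpha>) =
        (\<Sum>lam\<in>partitions_of n. (\<Sum>i\<in>I. w i * a i n lam) * power_sum lam \<alpha>) \<and>
      (\<Sum>i\<in>I. w i * g i \<alpha>) = (\<Sum>lam\<in>partitions_of n.
        (-1) ^ (n - length lam) * (\<Sum>i\<in>I. w i * a i n lam) * power_sum lam \<alpha>)"
      by (simp add: sum.swap[of _ I] sum_distrib_left sum_distrib_right)
  qed
qed

subsection \<open>Set colorings and independent sets\<close>

definition weak_colorings :: "('a \<Rightarrow> 'a \<Rightarrow> bool) \<Rightarrow> 'a set \<Rightarrow> mono \<Rightarrow> ('a \<Rightarrow> nat set) set" where
  "weak_colorings E W \<alpha> = {\<kappa> \<in> W \<rightarrow>\<^sub>E {S. finite S}.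
     (\<forall>u\<in>W. \<forall>v\<in>W. E u v \<longrightarrow> \<kappa> u \<inter> \<kappa> v = {}) \<and> coloring_mono W \<kappa> = \<alpha>}"

lemma lookup_coloring_mono:
  assumes "finite W" "\<forall>v\<in>W. finite (\<kappa> v)"
  shows "Poly_Mapping.lookup (coloring_mono W \<kappa>) i = card {v \<in> W. i \<in> \<kappa> v}"
proof -
  have "Poly_Mapping.lookup (coloring_mono W \<kappa>) i = (\<Sum>v\<in>W. if i \<in> \<kappa> v then 1 else 0)"
    unfolding coloring_mono_def lookup_sum lookup_single when_def
    using assms by (intro sum.cong refl) (simp add: sum.delta)
  also have "\<dots> = card {v \<in> W. i \<in> \<kappa> v}"
    using assms by (simp add: sum.inter_filter [symmetric])
  finally show ?thesis .
qed

lemma card_color_class: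
  assumes "finite W" "\<kappa> \<in> weak_colorings E W \<alpha>"
  shows "card {v \<in> W. i \<in> \<kappa> v} = Poly_Mapping.lookup \<alpha> i"
  using assms lookup_coloring_mono[OF assms(1), of \<kappa> i] by (auto simp: weak_colorings_def PiE_iff)

lemma weak_coloring_of_color_classes:
  assumes W: "finite W"
    and S: "S \<in> (\<Pi>\<^sub>E i\<in>Poly_Mapping.keys \<alpha>.
      {S. S \<subseteq> W \<and> independent E S \<and> card S = Poly_Mapping.lookup \<alpha> i})"
  shows "(\<lambda>v\<in>W. {i \<in> Poly_Mapping.keys \<alpha>. v \<in> S i}) \<in> weak_colorings E W \<alpha>"
proof -
  define \<kappa> where "\<kappa> = (\<lambda>v\<in>W. {i \<in> Poly_Mapping.keys \<alpha>. v \<in> S i})"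
  have "Poly_Mapping.lookup (coloring_mono W \<kappa>) i = Poly_Mapping.lookup \<alpha> i" for i
  proof -
    have "{v \<in> W. i \<in> \<kappa> v} = (if i \<in> Poly_Mapping.keys \<alpha> then S i else {})"
      using S by (auto simp: \<kappa>_def PiE_iff)
    then show ?thesis
      using S by (auto simp: lookup_coloring_mono[OF W] \<kappa>_def PiE_iff in_keys_iff)
  qed
  then have "coloring_mono W \<kappa> = \<alpha>"
    by (rule poly_mapping_eqI)
  moreover have "\<forall>u\<in>W. \<forall>v\<in>W. E u v \<longrightarrow> \<kappa> u \<inter> \<kappa> v = {}"
    using S by (auto simp: \<kappa>_def independent_def PiE_iff)
  ultimately show ?thesis
    by (simp add: weak_colorings_def \<kappa>_def)
qed

lemma bij_betw_weak_colorings_color_classes: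
  assumes W: "finite W"
  shows "bij_betw (\<lambda>\<kappa>. \<lambda>i\<in>Poly_Mapping.keys \<alpha>. {v \<in> W. i \<in> \<kappa> v}) (weak_colorings E W \<alpha>)
    (\<Pi>\<^sub>E i\<in>Poly_Mapping.keys \<alpha>. {S. S \<subseteq> W \<and> independent E S \<and> card S = Poly_Mapping.lookup \<alpha> i})"
  (is "bij_betw ?classes _ (\<Pi>\<^sub>E i\<in>?K. ?Ind i)")
proof (rule bij_betw_byWitness[where f' = "\<lambda>S. \<lambda>v\<in>W. {i \<in> ?K. v \<in> S i}"])
  have colors_in_keys: "\<kappa> v \<subseteq> ?K" if "\<kappa> \<in> weak_colorings E W \<alpha>" "v \<in> W" for \<kappa> v
  proof
    fix i assume "i \<in> \<kappa> v"
    then have "card {v \<in> W. i \<in> \<kappa> v} \<noteq> 0"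
      using that(2) W by auto
    then show "i \<in> ?K"
      using card_color_class[OF W that(1)] by (simp add: in_keys_iff)
  qed
  show "\<forall>\<kappa>\<in>weak_colorings E W \<alpha>. (\<lambda>v\<in>W. {i \<in> ?K. v \<in> ?classes \<kappa> i}) = \<kappa>"
  proof (intro ballI ext)
    fix \<kappa> v assume "\<kappa> \<in> weak_colorings E W \<alpha>"
    then show "(\<lambda>v\<in>W. {i \<in> ?K. v \<in> ?classes \<kappa> i}) v = \<kappa> v"
      using colors_in_keys[of \<kappa> v]
      by (cases "v \<in> W") (auto simp: weak_colorings_def PiE_iff extensional_def)
  qed
  show "\<forall>S\<in>\<Pi>\<^sub>E i\<in>?K. ?Ind i. ?classes (\<lambda>v\<in>W. {i \<in> ?K. v \<in> S i}) = S"
  proof (intro ballI ext)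
    fix S i assume "S \<in> (\<Pi>\<^sub>E i\<in>?K. ?Ind i)"
    then show "?classes (\<lambda>v\<in>W. {i \<in> ?K. v \<in> S i}) i = S i"
      by (cases "i \<in> ?K") (auto simp: PiE_iff extensional_def)
  qed
  show "?classes ` weak_colorings E W \<alpha> \<subseteq> (\<Pi>\<^sub>E i\<in>?K. ?Ind i)"
  proof (rule image_subsetI)
    fix \<kappa> assume \<kappa>: "\<kappa> \<in> weak_colorings E W \<alpha>"
    then have "{v \<in> W. i \<in> \<kappa> v} \<in> ?Ind i" for i
      using card_color_class[OF W \<kappa>, of i] unfolding weak_colorings_def independent_def by blast
    then show "?classes \<kappa> \<in> (\<Pi>\<^sub>E i\<in>?K. ?Ind i)"
      by simp
  qed
  show "(\<lambda>S. \<lambda>v\<in>W. {i \<in> ?K. v \<in> S i}) ` (\<Pi>\<^sub>E i\<in>?K. ?Ind i) \<subseteq> weak_colorings E W \<alpha>"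
    using weak_coloring_of_color_classes[OF W] by blast
qed

lemma
  assumes "finite W"
  shows finite_weak_colorings: "finite (weak_colorings E W \<alpha>)"
    and prod_all_vars_indep_poly: "prod_all_vars (indep_poly W E) \<alpha> = of_nat (card (weak_colorings E W \<alpha>))"
proof -
  note bij = bij_betw_weak_colorings_color_classes[OF assms, of \<alpha> E]
  have "finite {S. S \<subseteq> W \<and> independent E S \<and> card S = k}" for k
    using assms by (rule rev_finite_subset[OF finite_Pow_iff[THEN iffD2]]) auto
  then show "finite (weak_colorings E W \<alpha>)"
    using bij_betw_finite[OF bij] by (simp add: finite_PiE)
  show "prod_all_vars (indep_poly W E) \<alpha> = of_nat (card (weak_colorings E W \<alpha>))"
    using bij_betw_same_card[OF bij] by (simp add: prod_all_vars_def indep_poly_def card_PiE)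
qed

lemma coloring_mono_eq_subset:
  assumes "finite S" "U \<subseteq> S" "\<forall>v\<in>S - U. \<kappa> v = {}"
  shows "coloring_mono S \<kappa> = coloring_mono U \<kappa>"
  unfolding coloring_mono_def by (rule sum.mono_neutral_right) (use assms in auto)

lemma bij_betw_restrict_weak_colorings:
  assumes S: "finite S" and U: "U \<subseteq> S"
  shows "bij_betw (\<lambda>\<kappa>. restrict \<kappa> U) {\<kappa> \<in> weak_colorings E S \<alpha>. {v \<in> S. \<kappa> v \<noteq> {}} = U}
    {\<kappa>. proper_set_coloring U E \<kappa> \<and> coloring_mono U \<kappa> = \<alpha>}"
  (is "bij_betw _ ?A ?B")
proof -
  define extend where "extend \<kappa> = (\<lambda>v\<in>S. if v \<in> U then \<kappa> v else {})" for \<kappa> :: "'a \<Rightarrow> nat set"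
  show ?thesis
  proof (rule bij_betw_byWitness[where f' = extend])
    show "\<forall>\<kappa>\<in>?A. extend (restrict \<kappa> U) = \<kappa>"
      by (auto simp: extend_def weak_colorings_def PiE_iff extensional_def fun_eq_iff)
    show "\<forall>\<kappa>\<in>?B. restrict (extend \<kappa>) U = \<kappa>"
      using U by (auto simp: extend_def proper_set_coloring_def PiE_iff extensional_def fun_eq_iff)
    show "(\<lambda>\<kappa>. restrict \<kappa> U) ` ?A \<subseteq> ?B"
    proof (rule image_subsetI)
      fix \<kappa> assume "\<kappa> \<in> ?A"
      then have \<kappa>: "\<kappa> \<in> S \<rightarrow>\<^sub>E {S. finite S}" "\<forall>u\<in>S. \<forall>v\<in>S. E u v \<longrightarrow> \<kappa> u \<inter> \<kappa> v = {}"
          "coloring_mono S \<kappa> = \<alpha>" "U = {v \<in> S. \<kappa> v \<noteq> {}}"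
        by (auto simp: weak_colorings_def)
      have "coloring_mono U (restrict \<kappa> U) = \<alpha>"
        using coloring_mono_eq_subset[OF S U, of \<kappa>] \<kappa>(3,4) by (simp add: coloring_mono_def)
      moreover have "\<forall>u\<in>U. \<forall>v\<in>U. E u v \<longrightarrow> restrict \<kappa> U u \<inter> restrict \<kappa> U v = {}"
        using \<kappa>(2) U by auto
      ultimately show "restrict \<kappa> U \<in> ?B"
        using \<kappa>(1,4) by (auto simp: proper_set_coloring_def PiE_iff)
    qed
    show "extend ` ?B \<subseteq> ?A"
    proof (rule image_subsetI)
      fix \<kappa> assume \<kappa>: "\<kappa> \<in> ?B"
      have "coloring_mono S (extend \<kappa>) = coloring_mono U (extend \<kappa>)"
        using U by (intro coloring_mono_eq_subset[OF S]) (auto simp: extend_def)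
      also have "\<dots> = \<alpha>"
        using \<kappa> U by (auto simp: extend_def coloring_mono_def intro!: sum.cong)
      finally show "extend \<kappa> \<in> ?A"
        using \<kappa> U by (auto simp: weak_colorings_def proper_set_coloring_def extend_def PiE_iff)
    qed
  qed
qed

lemma card_weak_colorings_eq_sum_proper:
  assumes S: "finite S"
  shows "card (weak_colorings E S \<alpha>) =
    (\<Sum>U\<in>Pow S. card {\<kappa>. proper_set_coloring U E \<kappa> \<and> coloring_mono U \<kappa> = \<alpha>})"
proof -
  have "card (weak_colorings E S \<alpha>) =
      (\<Sum>U\<in>Pow S. card {\<kappa> \<in> weak_colorings E S \<alpha>. {v \<in> S. \<kappa> v \<noteq> {}} = U})"
    using sum.group[of "weak_colorings E S \<alpha>" "Pow S" "\<lambda>\<kappa>. {v \<in> S. \<kappa> v \<noteq> {}}" "\<lambda>_. 1::nat"]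
    by (simp add: S finite_weak_colorings image_subset_iff)
  also have "\<dots> = (\<Sum>U\<in>Pow S. card {\<kappa>. proper_set_coloring U E \<kappa> \<and> coloring_mono U \<kappa> = \<alpha>})"
    using S by (intro sum.cong refl bij_betw_same_card[OF bij_betw_restrict_weak_colorings]) auto
  finally show ?thesis .
qed

lemma chromatic_set_sym_inclusion_exclusion:
  assumes "finite V"
  shows "chromatic_set_sym V E \<alpha> =
    (\<Sum>W\<in>Pow V. (-1) ^ card (V - W) * prod_all_vars (indep_poly W E) \<alpha>)"
proof -
  let ?f = "\<lambda>U. of_nat (card {\<kappa>. proper_set_coloring U E \<kappa> \<and> coloring_mono U \<kappa> = \<alpha>}) :: rat"
  let ?g = "\<lambda>W. of_nat (card (weak_colorings E W \<alpha>)) :: rat"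
  have "?f V = (\<Sum>W\<in>Pow V. (-1) ^ (card V - card W) * ?g W)"
    using assms by (intro inclusion_exclusion_mobius) (simp_all add: card_weak_colorings_eq_sum_proper)
  also have "\<dots> = (\<Sum>W\<in>Pow V. (-1) ^ card (V - W) * prod_all_vars (indep_poly W E) \<alpha>)"
    using assms by (intro sum.cong refl)
      (auto simp: card_Diff_subset finite_subset prod_all_vars_indep_poly)
  finally show ?thesis
    by (simp add: chromatic_set_sym_def)
qed

lemma indep_poly_nth_0:
  assumes "finite W"
  shows "indep_poly W E $ 0 = 1"
proof -
  have "{S. S \<subseteq> W \<and> independent E S \<and> card S = 0} = {{}}"
    using assms by (auto simp: independent_def card_eq_0_iff dest: finite_subset)
  then show ?thesis
    by (simp add: indep_poly_def)
qed

theorem mainTheorem7: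
  fixes V :: "'a set" and E :: "'a \<Rightarrow> 'a \<Rightarrow> bool"
  assumes "simple_graph V E"
  shows "omega_eq (chromatic_set_sym V E)
           (\<lambda>\<alpha>. \<Sum>W\<in>Pow V. (-1) ^ card (V - W) * prod_all_vars (heap_series W E) \<alpha>)"
proof -
  have V: "finite V"
    using assms by (simp add: simple_graph_def)
  then have "chromatic_set_sym V E =
      (\<lambda>\<alpha>. \<Sum>W\<in>Pow V. (-1) ^ card (V - W) * prod_all_vars (indep_poly W E) \<alpha>)"
    by (intro ext chromatic_set_sym_inclusion_exclusion)
  moreover have "omega_eq
      (\<lambda>\<alpha>. \<Sum>W\<in>Pow V. (-1) ^ card (V - W) * prod_all_vars (indep_poly W E) \<alpha>)
      (\<lambda>\<alpha>. \<Sum>W\<in>Pow V. (-1) ^ card (V - W) * prod_all_vars (heap_series W E) \<alpha>)"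
    unfolding heap_series_def using V
    by (intro omega_eq_sum omega_eq_prod_all_vars_inverse_neg_var indep_poly_nth_0)
      (auto intro: finite_subset)
  ultimately show ?thesis
    by simp
qed

end
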